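(* Let $k$ be a field with a fixed algebraic closure $\overline{k}$, and let $l/k$ be a finite extension inside $\overline{k}$ which is normal and simple (generated by a single element). Then for every integer $N$ there exists $n\ge N$ and a hypersurface $H\subseteq\mathbf{P}^n_k$ which is an $l$-normic form.
   Context: All finite extensions of $k$ are considered as subfields of the fixed algebraic closure $\overline{k}$. A hypersurface $H\subseteq\mathbf{P}^n_k$ is an $l$-normic form if for every finite extension $k'/k$ inside $\overline{k}$, one has $H(k')\ne\emptyset$ if and only if $l\subseteq k'$. *)

theory Defs
  imports "HOL-Computational_Algebra.Polynomial"
begin

text \<open>Fields are modelled as subfields of an ambient field type 'a, which plays
the role of the fixed algebraic closure of k.\<close>

definition subfield :: "'a::field set \<Rightarrow> bool" where
  "subfield F \<longleftrightarrow> 0 \<in> F \<and> 1 \<in> F \<and>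
     (\<forall>x\<in>F. \<forall>y\<in>F. x + y \<in> F \<and> x - y \<in> F \<and> x * y \<in> F) \<and>
     (\<forall>x\<in>F. x \<noteq> 0 \<longrightarrow> inverse x \<in> F)"

definition poly_over :: "'a::field set \<Rightarrow> 'a poly \<Rightarrow> bool" where
  "poly_over F p \<longleftrightarrow> (\<forall>i. coeff p i \<in> F)"

definition alg_closed_type :: "'a::field itself \<Rightarrow> bool" where
  "alg_closed_type _ \<longleftrightarrow> (\<forall>p :: 'a poly. degree p \<ge> 1 \<longrightarrow> (\<exists>x. poly p x = 0))"

definition algebraic_over :: "'a::field set \<Rightarrow> 'a \<Rightarrow> bool" where
  "algebraic_over k x \<longleftrightarrow> (\<exists>p. p \<noteq> 0 \<and> poly_over k p \<and> poly p x = 0)"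

definition finite_ext :: "'a::field set \<Rightarrow> 'a set \<Rightarrow> bool" where
  "finite_ext k k' \<longleftrightarrow> subfield k' \<and> k \<subseteq> k' \<and>
     (\<exists>B. finite B \<and> B \<subseteq> k' \<and> k' = {\<Sum>b\<in>B. c b * b | c. \<forall>b\<in>B. c b \<in> k})"

definition irreducible_over :: "'a::field set \<Rightarrow> 'a poly \<Rightarrow> bool" where
  "irreducible_over k p \<longleftrightarrow> poly_over k p \<and> degree p \<ge> 1 \<and>
     \<not> (\<exists>q r. poly_over k q \<and> poly_over k r \<and> degree q \<ge> 1 \<and> degree r \<ge> 1 \<and> p = q * r)"

definition normal_ext :: "'a::field set \<Rightarrow> 'a set \<Rightarrow> bool" where
  "normal_ext k l \<longleftrightarrow> (\<forall>p. irreducible_over k p \<longrightarrow> (\<exists>x\<in>l. poly p x = 0) \<longrightarrow>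
       (\<forall>x. poly p x = 0 \<longrightarrow> x \<in> l))"

definition gen_field :: "'a::field set \<Rightarrow> 'a \<Rightarrow> 'a set" where
  "gen_field k \<theta> = \<Inter>{F. subfield F \<and> k \<subseteq> F \<and> \<theta> \<in> F}"

definition simple_ext :: "'a::field set \<Rightarrow> 'a set \<Rightarrow> bool" where
  "simple_ext k l \<longleftrightarrow> (\<exists>\<theta>. l = gen_field k \<theta>)"

text \<open>A form in variables x_0..x_n over k is given by its coefficient function
c on exponent vectors (functions nat \<Rightarrow> nat).\<close>
definition hypersurface_form :: "'a::field set \<Rightarrow> nat \<Rightarrow> nat \<Rightarrow> ((nat \<Rightarrow> nat) \<Rightarrow> 'a) \<Rightarrow> bool" where
  "hypersurface_form k n d c \<longleftrightarrow> d \<ge> 1 \<and> finite {\<alpha>. c \<alpha> \<noteq> 0} \<and> (\<exists>\<alpha>. c \<alpha> \<noteq> 0) \<and>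
     (\<forall>\<alpha>. c \<alpha> \<in> k) \<and>
     (\<forall>\<alpha>. c \<alpha> \<noteq> 0 \<longrightarrow> (\<forall>i>n. \<alpha> i = 0) \<and> (\<Sum>i\<le>n. \<alpha> i) = d)"

definition eval_form :: "nat \<Rightarrow> ((nat \<Rightarrow> nat) \<Rightarrow> 'a::field) \<Rightarrow> (nat \<Rightarrow> 'a) \<Rightarrow> 'a" where
  "eval_form n c x = (\<Sum>\<alpha>\<in>{\<alpha>. c \<alpha> \<noteq> 0}. c \<alpha> * (\<Prod>i\<le>n. x i ^ \<alpha> i))"

text \<open>H(k') \<noteq> \<emptyset>: a point of P^n with homogeneous coordinates in k' on which the form vanishes.\<close>
definition has_point :: "nat \<Rightarrow> ((nat \<Rightarrow> nat) \<Rightarrow> 'a::field) \<Rightarrow> 'a set \<Rightarrow> bool" where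
  "has_point n c k' \<longleftrightarrow> (\<exists>x. (\<forall>i\<le>n. x i \<in> k') \<and> (\<exists>i\<le>n. x i \<noteq> 0) \<and> eval_form n c x = 0)"

definition normic_form :: "'a::field set \<Rightarrow> 'a set \<Rightarrow> nat \<Rightarrow> ((nat \<Rightarrow> nat) \<Rightarrow> 'a) \<Rightarrow> bool" where
  "normic_form k l n c \<longleftrightarrow> (\<forall>k'. finite_ext k k' \<longrightarrow> (has_point n c k' \<longleftrightarrow> l \<subseteq> k'))"

end

theory Submission
  imports Defs "HOL-Algebra.Algebraic_Closure_Type"
begin

text \<open>Let \<open>\<theta>\<close> generate \<open>l\<close> and let \<open>f\<close> be its minimal polynomial over \<open>k\<close>, of degree \<open>d\<close>.
For a field \<open>K \<supseteq> k\<close>, \<open>f\<close> has a root in \<open>K\<close> iff \<open>l \<subseteq> K\<close>: a root \<open>r \<in> K\<close> lies in \<open>l\<close> by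
normality, and \<open>k(r) \<subseteq> l\<close> has the same degree \<open>d\<close> over \<open>k\<close> as \<open>l\<close>, so \<open>k(r) = l\<close>.
The binary form \<open>F(u, v) = v\<^sup>d f(u/v)\<close> has only the trivial zero over every such \<open>K\<close>
in which \<open>f\<close> has no root, and vanishes at \<open>(r, 1)\<close> for a root \<open>r\<close>. Nesting \<open>F\<close> into
itself \<open>j\<close> times, as in \<open>F(F(x\<^sub>0, x\<^sub>1), F(x\<^sub>2, x\<^sub>3))\<close>, gives a form in \<open>2\<^sup>j\<close> variables
with the same two properties, hence an \<open>l\<close>-normic hypersurface of dimension \<open>2\<^sup>j - 2\<close>.\<close>

hide_const (open)
  Subrings.subfield Polynomials.degree up_ring.coeff Polynomials.lead_coeff

lemma
  assumes "subfield k"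
  shows subfield_0: "0 \<in> k" and subfield_1: "1 \<in> k"
    and subfield_add: "a \<in> k \<Longrightarrow> b \<in> k \<Longrightarrow> a + b \<in> k"
    and subfield_diff: "a \<in> k \<Longrightarrow> b \<in> k \<Longrightarrow> a - b \<in> k"
    and subfield_mult: "a \<in> k \<Longrightarrow> b \<in> k \<Longrightarrow> a * b \<in> k"
    and subfield_inverse: "a \<in> k \<Longrightarrow> inverse a \<in> k"
  using assms by (auto simp: Defs.subfield_def)

lemma subfield_uminus: "subfield k \<Longrightarrow> a \<in> k \<Longrightarrow> - a \<in> k"
  by (metis diff_0 subfield_0 subfield_diff)

lemma subfield_divide: "subfield k \<Longrightarrow> a \<in> k \<Longrightarrow> b \<in> k \<Longrightarrow> a / b \<in> k"
  by (simp add: divide_inverse subfield_inverse subfield_mult)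

lemma subfield_power: "subfield k \<Longrightarrow> a \<in> k \<Longrightarrow> a ^ m \<in> k"
  by (induct m) (auto simp: subfield_1 subfield_mult)

lemma subfield_sum: "subfield k \<Longrightarrow> (\<And>i. i \<in> A \<Longrightarrow> g i \<in> k) \<Longrightarrow> sum g A \<in> k"
  by (induct A rule: infinite_finite_induct) (auto simp: subfield_0 subfield_add)

lemma gen_field_minimal: "subfield F \<Longrightarrow> k \<subseteq> F \<Longrightarrow> x \<in> F \<Longrightarrow> gen_field k x \<subseteq> F"
  unfolding gen_field_def by blast

lemma subset_gen_field: "k \<subseteq> gen_field k x"
  unfolding gen_field_def by blast

lemma mem_gen_field: "x \<in> gen_field k x"
  unfolding gen_field_def by blast

abbreviation type_ring :: "'a::field ring" where "type_ring \<equiv> ring_of_type_algebra"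

lemma type_ring_simps [simp]:
  "carrier (type_ring::'a::field ring) = UNIV"
  "x \<otimes>\<^bsub>(type_ring::'a ring)\<^esub> y = x * y"
  "x \<oplus>\<^bsub>(type_ring::'a ring)\<^esub> y = x + y"
  "\<one>\<^bsub>(type_ring::'a ring)\<^esub> = 1"
  "\<zero>\<^bsub>(type_ring::'a ring)\<^esub> = 0"
  by (auto simp: ring_of_type_algebra_def)

lemma domain_type_ring: "domain (type_ring::'a::field ring)"
  using field.axioms(1) field_from_type_algebra by blast

lemma ring_type_ring: "ring (type_ring::'a::field ring)"
  using domain_type_ring domain_def cring.axioms(1) by blast

lemma type_ring_minus [simp]: "\<ominus>\<^bsub>(type_ring::'a::field ring)\<^esub> x = - x"
  by (rule abelian_group.minus_equality[OF ring.is_abelian_group[OF ring_type_ring]]) auto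

lemma type_ring_inv [simp]: "(x::'a::field) \<noteq> 0 \<Longrightarrow> inv\<^bsub>type_ring\<^esub> x = inverse x"
  by (rule comm_monoid.comm_inv_char[OF cring.axioms(2)]) auto

lemma type_ring_subfield_iff: "Subrings.subfield k type_ring \<longleftrightarrow> subfield (k::'a::field set)"
proof
  assume k: "Subrings.subfield k type_ring"
  then have k_ring: "subring k type_ring"
    by (rule Subrings.subfieldE(1))
  have "inverse x \<in> k" if "x \<in> k" "x \<noteq> 0" for x
    using ring.subfield_m_inv(1)[OF ring_type_ring k, of x] that by simp
  moreover have "x - y \<in> k" if "x \<in> k" "y \<in> k" for x y
    using subringE(5,7)[OF k_ring] that by (metis type_ring_minus type_ring_simps(3) diff_conv_add_uminus)
  ultimately show "subfield k"
    using subringE(2,3,6,7)[OF k_ring] unfolding Defs.subfield_def by auto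
next
  assume k: "subfield k"
  have "subring k type_ring"
    by (rule ring.subringI[OF ring_type_ring])
       (auto simp: k subfield_0 subfield_1 subfield_mult subfield_add subfield_uminus)
  then show "Subrings.subfield k type_ring"
    by (rule field.subfieldI'[OF field_from_type_algebra]) (auto simp: k subfield_inverse)
qed

text \<open>HOL-Algebra polynomials are coefficient lists with the leading coefficient first, so
\<open>p :: 'a poly\<close> corresponds to \<open>rev (coeffs p)\<close>.\<close>

lemma eval_rev_coeffs: "ring.eval type_ring (rev (coeffs q)) x = poly q (x::'a::field)"
proof (induct q rule: pCons_induct)
  case 0
  then show ?case by (simp add: ring.eval.simps(1)[OF ring_type_ring])
next
  case (pCons a q)
  then have "coeffs (pCons a q) = a # coeffs q" by (auto simp: cCons_def)
  then show ?case
    using pCons(2) ring.eval_append[OF ring_type_ring, of "rev (coeffs q)" "[a]" x]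
    by (simp add: ring.eval.simps[OF ring_type_ring] algebra_simps)
qed

lemma rev_coeffs_carrier:
  assumes "poly_over k q"
  shows "rev (coeffs q) \<in> carrier (k[X]\<^bsub>(type_ring::'a::field ring)\<^esub>)"
proof -
  have "set (rev (coeffs q)) \<subseteq> k"
    using assms unfolding poly_over_def by (auto simp: coeffs_def)
  moreover have "q \<noteq> 0 \<Longrightarrow> hd (rev (coeffs q)) \<noteq> 0"
    by (simp add: hd_rev last_coeffs_eq_coeff_degree)
  ultimately show ?thesis
    unfolding univ_poly_carrier[symmetric] polynomial_def by auto
qed

lemma degree_rev_coeffs: "Polynomials.degree (rev (coeffs q)) = degree q"
  by (cases "q = 0") (simp_all add: length_coeffs)

lemma rev_coeffs_Poly_rev:
  assumes "p \<in> carrier (k[X]\<^bsub>(type_ring::'a::field ring)\<^esub>)"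
  shows "rev (coeffs (Poly (rev p))) = p"
proof (cases p)
  case (Cons a p')
  then have "a \<noteq> 0"
    using assms unfolding univ_poly_carrier[symmetric] polynomial_def by simp
  then have "strip_while ((=) 0) (rev p) = rev p"
    using Cons by (simp only: rev.simps strip_while_snoc) simp
  then show ?thesis by (simp add: coeffs_Poly)
qed simp

lemma (in ring) dimension_subspace_eq:
  assumes K: "Subrings.subfield K R" and E: "dimension n K E" and E': "dimension n K E'" and "E' \<subseteq> E"
  shows "E' = E"
proof -
  obtain Vs where Vs: "set Vs \<subseteq> carrier R" "independent K Vs" "length Vs = n" "Span K Vs = E'"
    using exists_base[OF K E'] by blast
  then have "Span K Vs = E"
    using independent_length_eq_dimension[OF K E Vs(2)] Span_base_incl[OF K Vs(1)] \<open>E' \<subseteq> E\<close>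
    by auto
  then show ?thesis using Vs(4) by simp
qed

locale algebraic_subfield =
  fixes k :: "'a::field set"
  assumes subfield_k: "subfield k" and algebraic: "\<forall>x. algebraic_over k x"
begin

lemma ring_subfield_k: "Subrings.subfield k type_ring"
  using subfield_k type_ring_subfield_iff by blast

lemma subring_k: "subring k type_ring"
  using ring_subfield_k by (rule Subrings.subfieldE(1))

lemma ring_algebraic: "(ring.algebraic type_ring over k) x"
proof -
  obtain p where "p \<noteq> 0" "poly_over k p" "poly p x = 0"
    using algebraic unfolding algebraic_over_def by blast
  then show ?thesis
    by (intro ring.algebraicI[OF ring_type_ring rev_coeffs_carrier, of k p])
       (auto simp: eval_rev_coeffs)
qed

definition min_poly :: "'a \<Rightarrow> 'a poly" where
  "min_poly x = Poly (rev (ring.Irr type_ring k x))"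

lemma Irr_type_ring:
  "ring.Irr type_ring k x \<in> carrier (k[X]\<^bsub>type_ring\<^esub>)"
  "ring_irreducible\<^bsub>k[X]\<^bsub>type_ring\<^esub>\<^esub> (ring.Irr type_ring k x)"
  "Polynomials.lead_coeff (ring.Irr type_ring k x) = 1"
  "ring.eval type_ring (ring.Irr type_ring k x) x = 0"
  using domain.IrrE[OF domain_type_ring ring_subfield_k _ ring_algebraic] by auto

lemma rev_coeffs_min_poly: "rev (coeffs (min_poly x)) = ring.Irr type_ring k x"
  unfolding min_poly_def using rev_coeffs_Poly_rev[OF Irr_type_ring(1)] .

lemma poly_min_poly: "poly (min_poly x) y = ring.eval type_ring (ring.Irr type_ring k x) y"
  using eval_rev_coeffs[of "min_poly x" y] rev_coeffs_min_poly by simp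

lemma degree_Irr: "Polynomials.degree (ring.Irr type_ring k x) = degree (min_poly x)"
  using degree_rev_coeffs[of "min_poly x"] rev_coeffs_min_poly by simp

lemma min_poly_nonzero: "min_poly x \<noteq> 0"
  using Irr_type_ring(2)[of x] rev_coeffs_min_poly[of x]
  by (auto simp: ring_irreducible_def univ_poly_zero)

lemma Irr_nonempty: "ring.Irr type_ring k x \<noteq> []"
  using rev_coeffs_min_poly[of x] min_poly_nonzero[of x] by auto

lemma min_poly_root: "poly (min_poly x) x = 0"
  using poly_min_poly Irr_type_ring(4) by simp

lemma min_poly_monic: "lead_coeff (min_poly x) = 1"
proof -
  have "lead_coeff (min_poly x) = last (coeffs (min_poly x))"
    using min_poly_nonzero by (simp add: last_coeffs_eq_coeff_degree)
  also have "\<dots> = hd (ring.Irr type_ring k x)"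
    by (simp add: hd_rev flip: rev_coeffs_min_poly)
  finally show ?thesis
    using Irr_type_ring(3) by simp
qed

lemma degree_min_poly_pos: "degree (min_poly x) \<ge> 1"
proof (rule ccontr)
  assume "\<not> degree (min_poly x) \<ge> 1"
  then have "degree (min_poly x) = 0" by simp
  then have "poly (min_poly x) x = 1"
    using min_poly_monic[of x] by (simp add: poly_altdef)
  then show False using min_poly_root by simp
qed

lemma min_poly_over: "poly_over k (min_poly x)"
proof -
  have "set (ring.Irr type_ring k x) \<subseteq> k"
    using Irr_type_ring(1)[of x] Irr_nonempty[of x]
    unfolding univ_poly_carrier[symmetric] polynomial_def by auto
  then have "set (coeffs (min_poly x)) \<subseteq> k"
    using rev_coeffs_min_poly by (metis set_rev)
  then show ?thesis
    unfolding poly_over_def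
    by (metis coeff_eq_0 coeff_in_coeffs leI min_poly_nonzero subfield_0 subfield_k subsetD)
qed

lemma degree_min_poly_le:
  assumes "poly_over k q" "q \<noteq> 0" "poly q x = 0"
  shows "degree (min_poly x) \<le> degree q"
proof -
  have q: "rev (coeffs q) \<in> carrier (k[X]\<^bsub>type_ring\<^esub>)"
    using rev_coeffs_carrier[OF assms(1)] .
  have "ring.Irr type_ring k x pdivides\<^bsub>type_ring\<^esub> rev (coeffs q)"
    using domain.Irr_minimal[OF domain_type_ring ring_subfield_k _ ring_algebraic[of x] q]
      assms(3) by (simp add: eval_rev_coeffs)
  then have "Polynomials.degree (ring.Irr type_ring k x) \<le> Polynomials.degree (rev (coeffs q))"
    using domain.pdivides_imp_degree_le[OF domain_type_ring subring_k Irr_type_ring(1) q]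
      assms(2) by simp
  then show ?thesis
    by (metis degree_Irr degree_rev_coeffs)
qed

lemma irreducible_over_min_poly: "irreducible_over k (min_poly x)"
  unfolding irreducible_over_def
proof (intro conjI min_poly_over degree_min_poly_pos notI)
  assume "\<exists>q r. poly_over k q \<and> poly_over k r \<and> 1 \<le> degree q \<and> 1 \<le> degree r \<and> min_poly x = q * r"
  then obtain q r where qr: "poly_over k q" "poly_over k r" "1 \<le> degree q" "1 \<le> degree r"
    and split: "min_poly x = q * r"
    by blast
  then have "q \<noteq> 0" "r \<noteq> 0" by auto
  then have deg: "degree (min_poly x) = degree q + degree r"
    using split by (simp add: degree_mult_eq)
  have "poly q x = 0 \<or> poly r x = 0"
    using min_poly_root[of x] split by simp
  then show False
    using degree_min_poly_le[OF qr(1) \<open>q \<noteq> 0\<close>] degree_min_poly_le[OF qr(2) \<open>r \<noteq> 0\<close>]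
      deg qr(3,4) by fastforce
qed

lemma gen_field_eq_simple_extension: "gen_field k x = ring.simple_extension type_ring k x"
proof
  have "Subrings.subfield (ring.simple_extension type_ring k x) type_ring"
    using domain.simple_extension_is_subfield[OF domain_type_ring ring_subfield_k] ring_algebraic
    by simp
  then show "gen_field k x \<subseteq> ring.simple_extension type_ring k x"
    using ring.simple_extension_incl[OF ring_type_ring] ring.simple_extension_mem[OF ring_type_ring subring_k]
    by (intro gen_field_minimal) (simp_all add: type_ring_subfield_iff)
  have "subfield F \<Longrightarrow> subring F type_ring" for F :: "'a set"
    using Subrings.subfieldE(1) type_ring_subfield_iff by blast
  then show "ring.simple_extension type_ring k x \<subseteq> gen_field k x"
    using domain.simple_extension_minimal[OF domain_type_ring subring_k, of x]
    unfolding gen_field_def by auto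
qed

lemma subfield_gen_field: "subfield (gen_field k x)"
  using domain.simple_extension_is_subfield[OF domain_type_ring ring_subfield_k] ring_algebraic
  by (simp add: gen_field_eq_simple_extension flip: type_ring_subfield_iff)

lemma min_poly_of_root:
  assumes "poly (min_poly x) y = 0"
  shows "min_poly y = min_poly x"
proof -
  have "\<exists>!p. p \<in> carrier (k[X]\<^bsub>type_ring\<^esub>) \<and> pirreducible\<^bsub>type_ring\<^esub> k p \<and>
      ring.eval type_ring p y = 0 \<and> Polynomials.lead_coeff p = 1"
    using domain.minimal_polynomial_is_unique[OF domain_type_ring ring_subfield_k _ ring_algebraic]
    by simp
  then have "ring.Irr type_ring k y = ring.Irr type_ring k x"
    unfolding ring.Irr_def[OF ring_type_ring, of k y] type_ring_simps
    by (rule the1_equality) (use Irr_type_ring[of x] assms in \<open>simp add: poly_min_poly\<close>)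
  then show ?thesis
    unfolding min_poly_def by simp
qed

lemma dimension_gen_field: "ring.dimension type_ring (degree (min_poly x)) k (gen_field k x)"
  using domain.dimension_simple_extension[OF domain_type_ring ring_subfield_k _ ring_algebraic]
  by (simp add: gen_field_eq_simple_extension flip: degree_Irr)

lemma gen_field_conjugate:
  assumes "poly (min_poly x) y = 0" "y \<in> gen_field k x"
  shows "gen_field k y = gen_field k x"
proof (rule ring.dimension_subspace_eq[OF ring_type_ring ring_subfield_k])
  show "ring.dimension type_ring (degree (min_poly x)) k (gen_field k x)"
    by (rule dimension_gen_field)
  show "ring.dimension type_ring (degree (min_poly x)) k (gen_field k y)"
    using dimension_gen_field[of y] min_poly_of_root[OF assms(1)] by simp
  show "gen_field k y \<subseteq> gen_field k x"
    using gen_field_minimal[OF subfield_gen_field subset_gen_field assms(2)] .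
qed

lemma normal_ext_root_iff:
  assumes "normal_ext k l" "l = gen_field k x" "subfield K" "k \<subseteq> K"
  shows "(\<exists>y\<in>K. poly (min_poly x) y = 0) \<longleftrightarrow> l \<subseteq> K"
proof
  assume "\<exists>y\<in>K. poly (min_poly x) y = 0"
  then obtain y where y: "y \<in> K" "poly (min_poly x) y = 0" by blast
  then have "y \<in> l"
    using assms(1,2) irreducible_over_min_poly mem_gen_field min_poly_root
    unfolding normal_ext_def by blast
  then have "l = gen_field k y"
    using gen_field_conjugate[OF y(2)] assms(2) by simp
  then show "l \<subseteq> K"
    using gen_field_minimal[OF assms(3,4) y(1)] by simp
next
  assume "l \<subseteq> K"
  then show "\<exists>y\<in>K. poly (min_poly x) y = 0"
    using assms(2) mem_gen_field min_poly_root by blast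
qed

end

definition is_form :: "'a::field set \<Rightarrow> nat \<Rightarrow> nat \<Rightarrow> ((nat \<Rightarrow> nat) \<Rightarrow> 'a) \<Rightarrow> bool" where
  "is_form k n d c \<longleftrightarrow> finite {\<alpha>. c \<alpha> \<noteq> 0} \<and> (\<forall>\<alpha>. c \<alpha> \<in> k) \<and>
     (\<forall>\<alpha>. c \<alpha> \<noteq> 0 \<longrightarrow> (\<forall>i>n. \<alpha> i = 0) \<and> (\<Sum>i\<le>n. \<alpha> i) = d)"

lemma hypersurface_form_iff:
  "hypersurface_form k n d c \<longleftrightarrow> d \<ge> 1 \<and> (\<exists>\<alpha>. c \<alpha> \<noteq> 0) \<and> is_form k n d c"
  unfolding hypersurface_form_def is_form_def by auto

definition form_functions :: "'a::field set \<Rightarrow> nat \<Rightarrow> nat \<Rightarrow> ((nat \<Rightarrow> 'a) \<Rightarrow> 'a) set" where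
  "form_functions k n d = {eval_form n c | c. is_form k n d c}"

lemma form_functionsI:
  "is_form k n d c \<Longrightarrow> (\<And>x. P x = eval_form n c x) \<Longrightarrow> P \<in> form_functions k n d"
  unfolding form_functions_def by (blast intro: ext)

lemma form_functionsE:
  assumes "P \<in> form_functions k n d"
  obtains c where "is_form k n d c" "P = eval_form n c"
  using assms unfolding form_functions_def by blast

definition eval_monomial :: "nat \<Rightarrow> (nat \<Rightarrow> nat) \<Rightarrow> (nat \<Rightarrow> 'a::field) \<Rightarrow> 'a" where
  "eval_monomial n \<alpha> x = (\<Prod>i\<le>n. x i ^ \<alpha> i)"

lemma eval_monomial_add: "eval_monomial n (\<lambda>i. \<alpha> i + \<beta> i) x = eval_monomial n \<alpha> x * eval_monomial n \<beta> x"
  unfolding eval_monomial_def by (simp add: power_add prod.distrib)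

lemma eval_form_superset:
  assumes "finite S" "{\<alpha>. c \<alpha> \<noteq> 0} \<subseteq> S"
  shows "eval_form n c x = (\<Sum>\<alpha>\<in>S. c \<alpha> * eval_monomial n \<alpha> x)"
  unfolding eval_form_def eval_monomial_def
  by (rule sum.mono_neutral_left) (use assms in auto)

lemma form_functions_zero: "subfield k \<Longrightarrow> (\<lambda>x. 0) \<in> form_functions k n d"
  by (rule form_functionsI[of k n d "\<lambda>_. 0"]) (auto simp: is_form_def subfield_0 eval_form_def)

lemma form_functions_monomial:
  assumes "subfield k" "a \<in> k" "\<forall>i>n. \<alpha> i = 0" "(\<Sum>i\<le>n. \<alpha> i) = d"
  shows "(\<lambda>x. a * eval_monomial n \<alpha> x) \<in> form_functions k n d"
proof -
  define c where "c = (\<lambda>\<beta>. if \<beta> = \<alpha> then a else 0)"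
  have "{\<beta>. c \<beta> \<noteq> 0} \<subseteq> {\<alpha>}"
    unfolding c_def by auto
  show ?thesis
  proof (rule form_functionsI)
    show "is_form k n d c"
      using assms \<open>{\<beta>. c \<beta> \<noteq> 0} \<subseteq> {\<alpha>}\<close> finite_subset
      unfolding is_form_def c_def by (auto simp: subfield_0)
    show "a * eval_monomial n \<alpha> x = eval_form n c x" for x
      using eval_form_superset[of "{\<alpha>}" c n x] \<open>{\<beta>. c \<beta> \<noteq> 0} \<subseteq> {\<alpha>}\<close> by (simp add: c_def)
  qed
qed

lemma form_functions_const:
  assumes "subfield k" "a \<in> k"
  shows "(\<lambda>x. a) \<in> form_functions k n 0"
  using form_functions_monomial[OF assms, of n "\<lambda>_. 0"] by (simp add: eval_monomial_def)

lemma form_functions_var: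
  assumes "subfield k" "j \<le> n"
  shows "(\<lambda>x. x j) \<in> form_functions k n 1"
proof -
  define e where "e = (\<lambda>i::nat. if i = j then 1 else 0::nat)"
  have "\<forall>i>n. e i = 0" "(\<Sum>i\<le>n. e i) = 1"
    using assms(2) unfolding e_def by auto
  then have "(\<lambda>x. 1 * eval_monomial n e x) \<in> form_functions k n 1"
    using assms(1) by (intro form_functions_monomial subfield_1)
  moreover have "eval_monomial n e x = x j" for x :: "nat \<Rightarrow> 'a"
    using assms(2) unfolding eval_monomial_def e_def
    by (simp add: prod.delta if_distrib cong: if_cong)
  ultimately show ?thesis
    by simp
qed

lemma form_functions_add:
  assumes k: "subfield k" and "P \<in> form_functions k n d" "Q \<in> form_functions k n d"
  shows "(\<lambda>x. P x + Q x) \<in> form_functions k n d"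
proof -
  obtain c where c: "is_form k n d c" and P: "P = eval_form n c"
    using assms(2) by (rule form_functionsE)
  obtain c' where c': "is_form k n d c'" and Q: "Q = eval_form n c'"
    using assms(3) by (rule form_functionsE)
  define S where "S = {\<alpha>. c \<alpha> \<noteq> 0} \<union> {\<alpha>. c' \<alpha> \<noteq> 0}"
  have S: "finite S"
    using c c' by (simp add: S_def is_form_def)
  have supp: "{\<alpha>. c \<alpha> + c' \<alpha> \<noteq> 0} \<subseteq> S"
    by (auto simp: S_def)
  show ?thesis
  proof (rule form_functionsI)
    show "is_form k n d (\<lambda>\<alpha>. c \<alpha> + c' \<alpha>)"
      using c c' finite_subset[OF supp S] supp unfolding is_form_def S_def
      by (auto simp: k subfield_add)
    show "P x + Q x = eval_form n (\<lambda>\<alpha>. c \<alpha> + c' \<alpha>) x" for x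
      using eval_form_superset[OF S supp, of n x]
        eval_form_superset[OF S, of c n x] eval_form_superset[OF S, of c' n x]
      by (auto simp: S_def P Q distrib_right sum.distrib)
  qed
qed

definition exponent_sum :: "(nat \<Rightarrow> nat) \<times> (nat \<Rightarrow> nat) \<Rightarrow> nat \<Rightarrow> nat" where
  "exponent_sum p i = fst p i + snd p i"

definition coeff_product :: "((nat \<Rightarrow> nat) \<Rightarrow> 'a::field) \<Rightarrow> ((nat \<Rightarrow> nat) \<Rightarrow> 'a) \<Rightarrow> (nat \<Rightarrow> nat) \<Rightarrow> 'a" where
  "coeff_product c c' \<gamma> =
     (\<Sum>p\<in>{p \<in> {\<alpha>. c \<alpha> \<noteq> 0} \<times> {\<beta>. c' \<beta> \<noteq> 0}. exponent_sum p = \<gamma>}. c (fst p) * c' (snd p))"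

lemma coeff_product_support:
  "{\<gamma>. coeff_product c c' \<gamma> \<noteq> 0} \<subseteq> exponent_sum ` ({\<alpha>. c \<alpha> \<noteq> 0} \<times> {\<beta>. c' \<beta> \<noteq> 0})"
proof
  fix \<gamma> assume "\<gamma> \<in> {\<gamma>. coeff_product c c' \<gamma> \<noteq> 0}"
  then have "{p \<in> {\<alpha>. c \<alpha> \<noteq> 0} \<times> {\<beta>. c' \<beta> \<noteq> 0}. exponent_sum p = \<gamma>} \<noteq> {}"
    unfolding coeff_product_def by (intro notI) simp
  then show "\<gamma> \<in> exponent_sum ` ({\<alpha>. c \<alpha> \<noteq> 0} \<times> {\<beta>. c' \<beta> \<noteq> 0})"
    by blast
qed

lemma eval_form_coeff_product:
  assumes "finite {\<alpha>. c \<alpha> \<noteq> 0}" "finite {\<beta>. c' \<beta> \<noteq> 0}"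
  shows "eval_form n (coeff_product c c') x = eval_form n c x * eval_form n c' x"
proof -
  define S where "S = {\<alpha>. c \<alpha> \<noteq> 0}"
  define T where "T = {\<beta>. c' \<beta> \<noteq> 0}"
  have ST: "finite (S \<times> T)"
    using assms by (simp add: S_def T_def)
  have "eval_form n (coeff_product c c') x =
      (\<Sum>\<gamma>\<in>exponent_sum ` (S \<times> T). coeff_product c c' \<gamma> * eval_monomial n \<gamma> x)"
    using ST coeff_product_support unfolding S_def T_def by (intro eval_form_superset) auto
  also have "\<dots> = (\<Sum>\<gamma>\<in>exponent_sum ` (S \<times> T). \<Sum>p\<in>{p \<in> S \<times> T. exponent_sum p = \<gamma>}.
      c (fst p) * c' (snd p) * eval_monomial n (exponent_sum p) x)"
    unfolding coeff_product_def sum_distrib_right S_def T_def by (rule sum.cong) auto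
  also have "\<dots> = (\<Sum>p\<in>S \<times> T. c (fst p) * c' (snd p) * eval_monomial n (exponent_sum p) x)"
    using ST by (intro sum.group) auto
  also have "\<dots> = (\<Sum>p\<in>S \<times> T. (c (fst p) * eval_monomial n (fst p) x) *
      (c' (snd p) * eval_monomial n (snd p) x))"
    unfolding exponent_sum_def by (rule sum.cong) (auto simp: eval_monomial_add)
  also have "\<dots> = (\<Sum>\<alpha>\<in>S. c \<alpha> * eval_monomial n \<alpha> x) * (\<Sum>\<beta>\<in>T. c' \<beta> * eval_monomial n \<beta> x)"
    by (simp add: sum_product sum.cartesian_product split_beta)
  also have "\<dots> = eval_form n c x * eval_form n c' x"
    by (simp add: eval_form_def S_def T_def eval_monomial_def)
  finally show ?thesis .
qed

lemma is_form_coeff_product: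
  assumes k: "subfield k" and c: "is_form k n d c" and c': "is_form k n e c'"
  shows "is_form k n (d + e) (coeff_product c c')"
  unfolding is_form_def
proof (intro conjI allI impI)
  have "finite ({\<alpha>. c \<alpha> \<noteq> 0} \<times> {\<beta>. c' \<beta> \<noteq> 0})"
    using c c' by (simp add: is_form_def)
  then show "finite {\<gamma>. coeff_product c c' \<gamma> \<noteq> 0}"
    by (rule finite_subset[OF coeff_product_support finite_imageI])
  show "coeff_product c c' \<gamma> \<in> k" for \<gamma>
    using c c' k unfolding coeff_product_def is_form_def by (auto intro!: subfield_sum subfield_mult)
  fix \<gamma> assume "coeff_product c c' \<gamma> \<noteq> 0"
  then have "\<gamma> \<in> exponent_sum ` ({\<alpha>. c \<alpha> \<noteq> 0} \<times> {\<beta>. c' \<beta> \<noteq> 0})"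
    using coeff_product_support by blast
  then obtain p where p: "c (fst p) \<noteq> 0" "c' (snd p) \<noteq> 0" and "\<gamma> = exponent_sum p"
    by (auto simp: mem_Times_iff)
  then have \<gamma>: "\<gamma> i = fst p i + snd p i" for i
    by (simp add: exponent_sum_def)
  show "\<gamma> i = 0" if "i > n" for i
    using c c' p that unfolding is_form_def \<gamma> by auto
  show "(\<Sum>i\<le>n. \<gamma> i) = d + e"
    using c c' p unfolding is_form_def \<gamma> by (simp add: sum.distrib)
qed

lemma form_functions_mult:
  assumes k: "subfield k" and "P \<in> form_functions k n d" "Q \<in> form_functions k n e"
  shows "(\<lambda>x. P x * Q x) \<in> form_functions k n (d + e)"
proof -
  obtain c where c: "is_form k n d c" and P: "P = eval_form n c"
    using assms(2) by (rule form_functionsE)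
  obtain c' where c': "is_form k n e c'" and Q: "Q = eval_form n c'"
    using assms(3) by (rule form_functionsE)
  show ?thesis
    using c c' unfolding P Q
    by (intro form_functionsI[OF is_form_coeff_product[OF k c c']])
       (simp add: eval_form_coeff_product is_form_def)
qed

lemma form_functions_power:
  assumes k: "subfield k" and P: "P \<in> form_functions k n d"
  shows "(\<lambda>x. P x ^ j) \<in> form_functions k n (j * d)"
proof (induct j)
  case 0
  then show ?case using form_functions_const[OF k subfield_1[OF k]] by simp
next
  case (Suc j)
  then show ?case using form_functions_mult[OF k P Suc] by simp
qed

lemma form_functions_sum:
  assumes k: "subfield k" and "finite A" and "\<And>i. i \<in> A \<Longrightarrow> P i \<in> form_functions k n d"
  shows "(\<lambda>x. \<Sum>i\<in>A. P i x) \<in> form_functions k n d"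
  using assms(2,3)
proof (induct A rule: finite_induct)
  case empty
  then show ?case using form_functions_zero[OF k] by simp
next
  case (insert a A)
  then show ?case using form_functions_add[OF k, of "P a" n d "\<lambda>x. \<Sum>i\<in>A. P i x"] by simp
qed

definition homogenized :: "'a::field poly \<Rightarrow> 'a \<Rightarrow> 'a \<Rightarrow> 'a" where
  "homogenized f u v = (\<Sum>i\<le>degree f. coeff f i * u ^ i * v ^ (degree f - i))"

lemma form_functions_homogenized:
  assumes k: "subfield k" and f: "poly_over k f"
    and P: "P \<in> form_functions k n e" and Q: "Q \<in> form_functions k n e"
  shows "(\<lambda>x. homogenized f (P x) (Q x)) \<in> form_functions k n (degree f * e)"
  unfolding homogenized_def
proof (rule form_functions_sum[OF k finite_atMost])
  fix i assume "i \<in> {..degree f}"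
  then have deg: "0 + i * e + (degree f - i) * e = degree f * e"
    by (simp flip: add_mult_distrib)
  have "(\<lambda>x. coeff f i) \<in> form_functions k n 0"
    using f k form_functions_const unfolding poly_over_def by blast
  then have "(\<lambda>x. coeff f i * P x ^ i * Q x ^ (degree f - i)) \<in>
      form_functions k n (0 + i * e + (degree f - i) * e)"
    by (intro form_functions_mult form_functions_power k P Q)
  then show "(\<lambda>x. coeff f i * P x ^ i * Q x ^ (degree f - i)) \<in> form_functions k n (degree f * e)"
    by (simp only: deg)
qed

lemma homogenized_right_0:
  assumes "lead_coeff f = 1"
  shows "homogenized f u 0 = u ^ degree f"
proof -
  have "homogenized f u 0 = (\<Sum>i\<le>degree f. if i = degree f then u ^ degree f else 0)"
    unfolding homogenized_def by (rule sum.cong) (use assms in auto)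
  then show ?thesis by simp
qed

lemma homogenized_eq_poly:
  assumes "v \<noteq> 0"
  shows "homogenized f u v = v ^ degree f * poly f (u / v)"
proof -
  have "v ^ degree f * poly f (u / v) = (\<Sum>i\<le>degree f. coeff f i * ((u / v) ^ i * v ^ degree f))"
    by (simp add: poly_altdef sum_distrib_left algebra_simps)
  also have "\<dots> = (\<Sum>i\<le>degree f. coeff f i * u ^ i * v ^ (degree f - i))"
  proof (rule sum.cong)
    fix i assume "i \<in> {..degree f}"
    then have "v ^ degree f = v ^ i * v ^ (degree f - i)"
      by (simp flip: power_add)
    then show "coeff f i * ((u / v) ^ i * v ^ degree f) = coeff f i * u ^ i * v ^ (degree f - i)"
      using assms by (simp add: power_divide field_simps)
  qed simp
  finally show ?thesis
    unfolding homogenized_def by simp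
qed

lemma homogenized_in_subfield:
  assumes "subfield K" "\<forall>i. coeff f i \<in> K" "u \<in> K" "v \<in> K"
  shows "homogenized f u v \<in> K"
  unfolding homogenized_def using assms
  by (intro subfield_sum) (auto intro!: subfield_mult subfield_power)

lemma homogenized_eq_0_imp:
  assumes "lead_coeff f = 1" "subfield K" "\<forall>r\<in>K. poly f r \<noteq> 0"
    and "u \<in> K" "v \<in> K" "homogenized f u v = 0"
  shows "u = 0 \<and> v = 0"
proof (cases "v = 0")
  case True
  then show ?thesis
    using homogenized_right_0[OF assms(1), of u] assms(6) by simp
next
  case False
  then have "poly f (u / v) = 0"
    using homogenized_eq_poly[OF False, of f u] assms(6) by simp
  moreover have "u / v \<in> K"
    using assms(2,4,5) by (rule subfield_divide)
  ultimately show ?thesis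
    using assms(3) by blast
qed

text \<open>\<open>iterated_form f j s\<close> is a form in the \<open>2\<^sup>j\<close> consecutive variables starting with \<open>x s\<close>.\<close>

fun iterated_form :: "'a::field poly \<Rightarrow> nat \<Rightarrow> nat \<Rightarrow> (nat \<Rightarrow> 'a) \<Rightarrow> 'a" where
  "iterated_form f 0 s x = x s"
| "iterated_form f (Suc j) s x =
     homogenized f (iterated_form f j s x) (iterated_form f j (s + 2 ^ j) x)"

lemma form_functions_iterated_form:
  assumes k: "subfield k" and f: "poly_over k f"
  shows "s + 2 ^ j \<le> Suc n \<Longrightarrow> (\<lambda>x. iterated_form f j s x) \<in> form_functions k n (degree f ^ j)"
proof (induct j arbitrary: s)
  case 0
  then show ?case using form_functions_var[OF k, of s n] by simp
next
  case (Suc j)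
  then show ?case
    using form_functions_homogenized[OF k f Suc(1)[of s] Suc(1)[of "s + 2 ^ j"]] by simp
qed

lemma iterated_form_eq_0:
  assumes "lead_coeff f = 1" "degree f \<ge> 1"
  shows "\<forall>i\<in>{s..<s + 2 ^ j}. x i = 0 \<Longrightarrow> iterated_form f j s x = 0"
proof (induct j arbitrary: s)
  case (Suc j)
  then show ?case
    using homogenized_right_0[OF assms(1), of 0] assms(2) by simp
qed simp

lemma iterated_form_in_subfield:
  assumes "subfield K" "\<forall>i. coeff f i \<in> K"
  shows "\<forall>i\<in>{s..<s + 2 ^ j}. x i \<in> K \<Longrightarrow> iterated_form f j s x \<in> K"
proof (induct j arbitrary: s)
  case (Suc j)
  then show ?case
    using homogenized_in_subfield[OF assms] by simp
qed simp

lemma iterated_form_eq_0_imp: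
  assumes "lead_coeff f = 1" "subfield K" "\<forall>i. coeff f i \<in> K" "\<forall>r\<in>K. poly f r \<noteq> 0"
  shows "\<forall>i\<in>{s..<s + 2 ^ j}. x i \<in> K \<Longrightarrow> iterated_form f j s x = 0 \<Longrightarrow>
    \<forall>i\<in>{s..<s + 2 ^ j}. x i = 0"
proof (induct j arbitrary: s)
  case (Suc j)
  have split: "{s..<s + 2 ^ Suc j} = {s..<s + 2 ^ j} \<union> {s + 2 ^ j..<(s + 2 ^ j) + 2 ^ j}"
    by auto
  then have left: "\<forall>i\<in>{s..<s + 2 ^ j}. x i \<in> K"
    and right: "\<forall>i\<in>{s + 2 ^ j..<(s + 2 ^ j) + 2 ^ j}. x i \<in> K"
    using Suc.prems(1) by auto
  have "iterated_form f j s x = 0 \<and> iterated_form f j (s + 2 ^ j) x = 0"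
    using Suc.prems(2) homogenized_eq_0_imp[OF assms(1,2,4)
        iterated_form_in_subfield[OF assms(2,3) left] iterated_form_in_subfield[OF assms(2,3) right]]
    by simp
  then show ?case
    using Suc.hyps[OF left] Suc.hyps[OF right] split by blast
qed simp

lemma iterated_form_unit_vector:
  assumes "lead_coeff f = 1" "degree f \<ge> 1"
  shows "iterated_form f j s (\<lambda>i. if i = s then 1 else 0) = 1"
proof (induct j arbitrary: s)
  case (Suc j)
  have "iterated_form f j (s + 2 ^ j) (\<lambda>i. if i = s then 1 else 0) = 0"
    by (rule iterated_form_eq_0[OF assms]) simp
  then show ?case
    using Suc homogenized_right_0[OF assms(1)] by simp
qed simp

lemma iterated_form_root:
  assumes "lead_coeff f = 1" "degree f \<ge> 1" "poly f r = 0"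
  shows "iterated_form f (Suc j) s (\<lambda>i. if i = s then r else if i = s + 1 then 1 else 0) = 0"
proof (induct j)
  case 0
  then show ?case
    using homogenized_eq_poly[of 1 f r] assms(3) by simp
next
  case (Suc j)
  have "iterated_form f (Suc j) (s + 2 ^ Suc j) (\<lambda>i. if i = s then r else if i = s + 1 then 1 else 0) = 0"
    by (rule iterated_form_eq_0[OF assms(1,2)]) (use one_less_power[of "2::nat" "Suc j"] in auto)
  then show ?case
    using Suc homogenized_right_0[OF assms(1), of 0] assms(2)
    by (simp del: iterated_form.simps(2) add: iterated_form.simps(2)[of f "Suc j"])
qed

lemma has_point_iff_root:
  assumes f: "lead_coeff f = 1" "degree f \<ge> 1" and K: "subfield K" "\<forall>i. coeff f i \<in> K"
    and n: "2 ^ j = Suc n" "j \<ge> 1" and c: "\<forall>x. eval_form n c x = iterated_form f j 0 x"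
  shows "has_point n c K \<longleftrightarrow> (\<exists>r\<in>K. poly f r = 0)"
proof
  have block: "{0..<0 + 2 ^ j} = {..n}"
    using n(1) by auto
  assume "has_point n c K"
  then obtain x where x: "\<forall>i\<le>n. x i \<in> K" "\<exists>i\<le>n. x i \<noteq> 0" "iterated_form f j 0 x = 0"
    using c unfolding has_point_def by auto
  show "\<exists>r\<in>K. poly f r = 0"
  proof (rule ccontr)
    assume "\<not> (\<exists>r\<in>K. poly f r = 0)"
    then have "\<forall>i\<in>{0..<0 + 2 ^ j}. x i = 0"
      using iterated_form_eq_0_imp[OF f(1) K, of 0 j x] x(1,3) unfolding block by auto
    then show False
      using x(2) block by auto
  qed
next
  assume "\<exists>r\<in>K. poly f r = 0"
  then obtain r where r: "r \<in> K" "poly f r = 0" by blast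
  obtain j' where j': "j = Suc j'"
    using n(2) by (cases j) auto
  define x where "x = (\<lambda>i::nat. if i = 0 then r else if i = 0 + 1 then 1 else 0)"
  have "iterated_form f j 0 x = 0"
    unfolding x_def j' by (rule iterated_form_root[OF f r(2)])
  moreover have "\<forall>i\<le>n. x i \<in> K"
    using r(1) K(1) unfolding x_def by (simp add: subfield_0 subfield_1)
  moreover have "1 \<le> n"
    using n one_less_power[of "2::nat" j] by simp
  then have "\<exists>i\<le>n. x i \<noteq> 0"
    unfolding x_def by (intro exI[of _ 1]) simp
  ultimately show "has_point n c K"
    unfolding has_point_def using c by auto
qed

lemma iterated_form_hypersurface:
  assumes k: "subfield k" and f: "poly_over k f" "lead_coeff f = 1" "degree f \<ge> 1"
    and n: "2 ^ j = Suc n"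
  obtains c where "hypersurface_form k n (degree f ^ j) c"
    "\<forall>x. eval_form n c x = iterated_form f j 0 x"
proof -
  obtain c where c: "is_form k n (degree f ^ j) c" "(\<lambda>x. iterated_form f j 0 x) = eval_form n c"
    using form_functions_iterated_form[OF k f(1), of 0 j n] n by (auto elim: form_functionsE)
  have "\<exists>\<alpha>. c \<alpha> \<noteq> 0"
  proof (rule ccontr)
    assume "\<not> (\<exists>\<alpha>. c \<alpha> \<noteq> 0)"
    then have "eval_form n c (\<lambda>i. if i = 0 then 1 else 0) = 0"
      by (simp add: eval_form_def)
    then show False
      using iterated_form_unit_vector[OF f(2,3), of j 0] fun_cong[OF c(2)] by simp
  qed
  then show thesis
    using that c f(3) by (simp add: hypersurface_form_iff fun_eq_iff)
qed

lemma (in algebraic_subfield) normic_form_iterated_min_poly: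
  assumes "normal_ext k l" "l = gen_field k \<theta>" "2 ^ j = Suc n" "j \<ge> 1"
    and c: "\<forall>x. eval_form n c x = iterated_form (min_poly \<theta>) j 0 x"
  shows "normic_form k l n c"
  unfolding normic_form_def
proof (intro allI impI)
  fix K assume "finite_ext k K"
  then have K: "subfield K" "k \<subseteq> K"
    unfolding finite_ext_def by auto
  then have "\<forall>i. coeff (min_poly \<theta>) i \<in> K"
    using min_poly_over unfolding poly_over_def by blast
  then show "has_point n c K \<longleftrightarrow> l \<subseteq> K"
    using has_point_iff_root[OF min_poly_monic degree_min_poly_pos K(1) _ assms(3,4) c]
      normal_ext_root_iff[OF assms(1,2) K] by simp
qed

theorem proposition3p3:
  fixes k l :: "'a::field set"
  assumes "alg_closed_type TYPE('a)"
    and "subfield k"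
    and "\<forall>x. algebraic_over k x"
    and "finite_ext k l"
    and "normal_ext k l"
    and "simple_ext k l"
  shows "\<forall>N::int. \<exists>n::nat. int n \<ge> N \<and>
           (\<exists>d c. hypersurface_form k n d c \<and> normic_form k l n c)"
proof
  fix N :: int
  obtain \<theta> where l: "l = gen_field k \<theta>"
    using assms(6) unfolding simple_ext_def by blast
  interpret algebraic_subfield k
    using assms(2,3) by unfold_locales
  define j where "j = Suc (nat N)"
  define n where "n = (2::nat) ^ j - 1"
  have "j < 2 ^ j"
    by (rule less_exp)
  then have n: "2 ^ j = Suc n" "j \<ge> 1" "j \<le> n"
    unfolding n_def j_def by auto
  then have "int n \<ge> N"
    unfolding j_def by linarith
  obtain c where hyp: "hypersurface_form k n (degree (min_poly \<theta>) ^ j) c"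
    and c: "\<forall>x. eval_form n c x = iterated_form (min_poly \<theta>) j 0 x"
    using iterated_form_hypersurface[OF assms(2) min_poly_over min_poly_monic degree_min_poly_pos n(1)] .
  have "normic_form k l n c"
    using normic_form_iterated_min_poly[OF assms(5) l n(1,2) c] .
  then show "\<exists>n. int n \<ge> N \<and> (\<exists>d c. hypersurface_form k n d c \<and> normic_form k l n c)"
    using \<open>int n \<ge> N\<close> hyp by blast
qed

end
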